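(* If $\alpha$ is a half-space quasiorder on a set $A$, then there exist linear orders $R_1,R_2$ on $A/(\alpha\cap\alpha^{-1})$ with $r_\alpha=R_1\cap R_2$; in particular the partial order $r_\alpha$ has order dimension at most $2$.
   Context: A quasiorder on $A$ is a reflexive and transitive relation; $\Delta_A=\{(a,a)\mid a\in A\}$. A quasiorder $\alpha$ on $A$ is a half-space if there is a quasiorder $\beta$ on $A$ with $\alpha\cup\beta=A\times A$ and $\alpha\cap\beta=\Delta_A$. For a quasiorder $\gamma$, $r_\gamma$ is the induced partial order on $A/(\gamma\cap\gamma^{-1})$: $([a],[b])\in r_\gamma$ iff $(a,b)\in\gamma$. The order dimension of a partial order is the least cardinality of a set of linear extensions of it whose intersection is the partial order. *)

theory Defs
  imports Main
begin

definition quasiorder_on :: "'a set \<Rightarrow> 'a rel \<Rightarrow> bool" where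
  "quasiorder_on A \<alpha> \<longleftrightarrow> refl_on A \<alpha> \<and> trans \<alpha>"

definition half_space :: "'a set \<Rightarrow> 'a rel \<Rightarrow> bool" where
  "half_space A \<alpha> \<longleftrightarrow> quasiorder_on A \<alpha> \<and>
     (\<exists>\<beta>. quasiorder_on A \<beta> \<and> \<alpha> \<union> \<beta> = A \<times> A \<and> \<alpha> \<inter> \<beta> = Id_on A)"

definition qkernel :: "'a rel \<Rightarrow> 'a rel" where
  "qkernel \<gamma> = \<gamma> \<inter> \<gamma>\<inverse>"

definition induced_order :: "'a rel \<Rightarrow> 'a set rel" where
  "induced_order \<gamma> = {(qkernel \<gamma> `` {a}, qkernel \<gamma> `` {b}) | a b. (a, b) \<in> \<gamma>}"

definition realizer :: "'b set \<Rightarrow> 'b rel \<Rightarrow> 'b rel set \<Rightarrow> bool" where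
  "realizer X r L \<longleftrightarrow> L \<noteq> {} \<and> (\<forall>R\<in>L. linear_order_on X R \<and> r \<subseteq> R) \<and> \<Inter> L = r"

definition order_dim_le :: "'b set \<Rightarrow> 'b rel \<Rightarrow> nat \<Rightarrow> bool" where
  "order_dim_le X r k \<longleftrightarrow> (\<exists>L. realizer X r L \<and> finite L \<and> card L \<le> k)"

end

theory Submission
  imports Defs
begin

text \<open>
  Let \<beta> be a complement of the half-space \<alpha>. Two \<alpha>-incomparable elements are related
  by \<beta> in both directions, so if z lies strictly below x and x is incomparable to y, then
  z lies below y: otherwise the \<beta>-chain z, y, x would put the pair (z, x) into
  \<alpha> \<inter> \<beta>, which is the diagonal. Consequently, resolving every incomparability of
  \<alpha> according to an arbitrary linear order V of A yields a total quasiorder with the same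
  kernel as \<alpha>. Doing so once with V and once with its dual gives two linear orders of the
  quotient whose intersection is the order induced by \<alpha>.
\<close>

lemma equiv_qkernel: "preorder_on A \<gamma> \<Longrightarrow> equiv A (qkernel \<gamma>)"
  unfolding preorder_on_def qkernel_def equiv_def refl_on_def sym_def trans_def by blast

lemma induced_orderE:
  assumes "preorder_on A \<gamma>" and "P \<in> induced_order \<gamma>"
  obtains x y where "P = (qkernel \<gamma> `` {x}, qkernel \<gamma> `` {y})" "(x, y) \<in> \<gamma>" "x \<in> A" "y \<in> A"
  using assms unfolding induced_order_def preorder_on_def by blast

lemma induced_order_iff:
  assumes pre: "preorder_on A \<gamma>" and "x \<in> A" "y \<in> A"
  shows "(qkernel \<gamma> `` {x}, qkernel \<gamma> `` {y}) \<in> induced_order \<gamma> \<longleftrightarrow> (x, y) \<in> \<gamma>"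
proof
  assume "(qkernel \<gamma> `` {x}, qkernel \<gamma> `` {y}) \<in> induced_order \<gamma>"
  then obtain x' y'
    where eq: "qkernel \<gamma> `` {x} = qkernel \<gamma> `` {x'}" "qkernel \<gamma> `` {y} = qkernel \<gamma> `` {y'}"
    and "(x', y') \<in> \<gamma>" "x' \<in> A" "y' \<in> A"
    using induced_orderE[OF pre] by (metis prod.inject)
  moreover have "(x, x') \<in> \<gamma>" "(y', y) \<in> \<gamma>"
    using eq \<open>x' \<in> A\<close> \<open>y' \<in> A\<close> assms eq_equiv_class_iff[OF equiv_qkernel[OF pre]]
    unfolding qkernel_def by blast+
  ultimately show "(x, y) \<in> \<gamma>"
    using pre unfolding preorder_on_def trans_def by blast
qed (auto simp: induced_order_def)

lemma linear_order_on_induced_order: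
  assumes pre: "preorder_on A \<gamma>" and tot: "total_on A \<gamma>"
  shows "linear_order_on (A // qkernel \<gamma>) (induced_order \<gamma>)"
proof -
  note iff = induced_order_iff[OF pre]
  have field: "induced_order \<gamma> \<subseteq> A // qkernel \<gamma> \<times> A // qkernel \<gamma>"
  proof
    fix P
    assume "P \<in> induced_order \<gamma>"
    then show "P \<in> A // qkernel \<gamma> \<times> A // qkernel \<gamma>"
      by (rule induced_orderE[OF pre]) (simp add: quotientI)
  qed
  have "refl_on (A // qkernel \<gamma>) (induced_order \<gamma>)"
    using iff pre unfolding refl_on_def preorder_on_def by (auto elim!: quotientE)
  moreover have "trans (induced_order \<gamma>)"
  proof (rule transI)
    fix X Y Z
    assume XY: "(X, Y) \<in> induced_order \<gamma>" and YZ: "(Y, Z) \<in> induced_order \<gamma>"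
    with field obtain x y z where "X = qkernel \<gamma> `` {x}" "Y = qkernel \<gamma> `` {y}" "Z = qkernel \<gamma> `` {z}"
      and "x \<in> A" "y \<in> A" "z \<in> A"
      by (blast elim!: quotientE)
    with XY YZ show "(X, Z) \<in> induced_order \<gamma>"
      using iff pre unfolding preorder_on_def trans_def by blast
  qed
  moreover have "antisym (induced_order \<gamma>)"
  proof (rule antisymI)
    fix X Y
    assume XY: "(X, Y) \<in> induced_order \<gamma>" and YX: "(Y, X) \<in> induced_order \<gamma>"
    with field obtain x y where "X = qkernel \<gamma> `` {x}" "Y = qkernel \<gamma> `` {y}" "x \<in> A" "y \<in> A"
      by (blast elim!: quotientE)
    with XY YX show "X = Y"
      using iff equiv_class_eq[OF equiv_qkernel[OF pre]] unfolding qkernel_def by blast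
  qed
  moreover have "total_on (A // qkernel \<gamma>) (induced_order \<gamma>)"
  proof (rule total_onI)
    fix X Y
    assume "X \<in> A // qkernel \<gamma>" "Y \<in> A // qkernel \<gamma>"
    then obtain x y where "X = qkernel \<gamma> `` {x}" "Y = qkernel \<gamma> `` {y}" "x \<in> A" "y \<in> A"
      by (blast elim!: quotientE)
    then show "(X, Y) \<in> induced_order \<gamma> \<or> (Y, X) \<in> induced_order \<gamma>"
      using iff tot pre unfolding total_on_def preorder_on_def refl_on_def by metis
  qed
  ultimately show ?thesis
    using field unfolding linear_order_on_def partial_order_on_def preorder_on_def by blast
qed

lemma induced_order_Int:
  assumes pre\<^sub>1: "preorder_on A \<gamma>\<^sub>1" and pre\<^sub>2: "preorder_on A \<gamma>\<^sub>2"
    and kernel: "qkernel \<gamma>\<^sub>1 = qkernel \<gamma>\<^sub>2"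
  shows "induced_order (\<gamma>\<^sub>1 \<inter> \<gamma>\<^sub>2) = induced_order \<gamma>\<^sub>1 \<inter> induced_order \<gamma>\<^sub>2"
proof -
  have kernel_Int: "qkernel (\<gamma>\<^sub>1 \<inter> \<gamma>\<^sub>2) = qkernel \<gamma>\<^sub>1"
    using kernel unfolding qkernel_def by blast
  have "induced_order \<gamma>\<^sub>1 \<inter> induced_order \<gamma>\<^sub>2 \<subseteq> induced_order (\<gamma>\<^sub>1 \<inter> \<gamma>\<^sub>2)"
  proof
    fix P
    assume P: "P \<in> induced_order \<gamma>\<^sub>1 \<inter> induced_order \<gamma>\<^sub>2"
    then obtain x y where "P = (qkernel \<gamma>\<^sub>1 `` {x}, qkernel \<gamma>\<^sub>1 `` {y})"
      and "(x, y) \<in> \<gamma>\<^sub>1" "x \<in> A" "y \<in> A"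
      using induced_orderE[OF pre\<^sub>1] by blast
    moreover from this have "(x, y) \<in> \<gamma>\<^sub>2"
      using P induced_order_iff[OF pre\<^sub>2] kernel by auto
    ultimately show "P \<in> induced_order (\<gamma>\<^sub>1 \<inter> \<gamma>\<^sub>2)"
      using kernel_Int unfolding induced_order_def by auto
  qed
  moreover have "induced_order (\<gamma>\<^sub>1 \<inter> \<gamma>\<^sub>2) \<subseteq> induced_order \<gamma>\<^sub>1 \<inter> induced_order \<gamma>\<^sub>2"
    using kernel kernel_Int unfolding induced_order_def by auto
  ultimately show ?thesis
    by (rule equalityI[rotated])
qed

lemma order_dim_le_2I:
  assumes "linear_order_on X R\<^sub>1" "linear_order_on X R\<^sub>2"
  shows "order_dim_le X (R\<^sub>1 \<inter> R\<^sub>2) 2"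
  unfolding order_dim_le_def realizer_def
  by (rule exI[of _ "{R\<^sub>1, R\<^sub>2}"]) (use assms in \<open>auto simp: card_insert_if\<close>)

definition incomparable :: "'a set \<Rightarrow> 'a rel \<Rightarrow> 'a rel" where
  "incomparable A \<alpha> = A \<times> A - (\<alpha> \<union> \<alpha>\<inverse>)"

lemma incomparable_sym: "(x, y) \<in> incomparable A \<alpha> \<Longrightarrow> (y, x) \<in> incomparable A \<alpha>"
  unfolding incomparable_def by blast

lemma incomparable_converse [simp]: "incomparable A (\<alpha>\<inverse>) = incomparable A \<alpha>"
  unfolding incomparable_def by blast

lemma quasiorder_on_converse: "quasiorder_on A (\<alpha>\<inverse>) \<longleftrightarrow> quasiorder_on A \<alpha>"
  unfolding quasiorder_on_def refl_on_def by simp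

lemma half_space_preorder_on:
  assumes "half_space A \<alpha>"
  shows "preorder_on A \<alpha>"
proof -
  obtain \<beta> where "\<alpha> \<union> \<beta> = A \<times> A"
    using assms unfolding half_space_def by blast
  then have "\<alpha> \<subseteq> A \<times> A"
    by (metis Un_upper1)
  then show ?thesis
    using assms unfolding half_space_def quasiorder_on_def preorder_on_def by blast
qed

lemma half_space_converse:
  assumes "half_space A \<alpha>"
  shows "half_space A (\<alpha>\<inverse>)"
proof -
  obtain \<beta> where "quasiorder_on A \<beta>"
    and cover: "\<alpha> \<union> \<beta> = A \<times> A" and meet: "\<alpha> \<inter> \<beta> = Id_on A"
    using assms unfolding half_space_def by blast
  moreover have "\<alpha>\<inverse> \<union> \<beta>\<inverse> = A \<times> A"
    by (metis cover converse_Un converse_Times)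
  moreover have "\<alpha>\<inverse> \<inter> \<beta>\<inverse> = Id_on A"
    by (metis meet converse_Int converse_Id_on)
  ultimately show ?thesis
    using assms unfolding half_space_def by (metis quasiorder_on_converse)
qed

lemma half_space_incomparable_pred:
  assumes hs: "half_space A \<alpha>" and xy: "(x, y) \<in> incomparable A \<alpha>" and zx: "(z, x) \<in> \<alpha>" "z \<noteq> x"
  shows "(z, y) \<in> \<alpha>"
proof (rule ccontr)
  assume zy: "(z, y) \<notin> \<alpha>"
  obtain \<beta> where "trans \<beta>" and cover: "\<alpha> \<union> \<beta> = A \<times> A" and meet: "\<alpha> \<inter> \<beta> = Id_on A"
    using hs unfolding half_space_def quasiorder_on_def by blast
  have "z \<in> A"
    using zx half_space_preorder_on[OF hs] unfolding preorder_on_def by blast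
  with xy have "(z, y) \<in> \<alpha> \<union> \<beta>" "(y, x) \<in> \<alpha> \<union> \<beta>"
    unfolding cover incomparable_def by blast+
  with zy xy have "(z, y) \<in> \<beta>" "(y, x) \<in> \<beta>"
    unfolding incomparable_def by blast+
  with \<open>trans \<beta>\<close> have "(z, x) \<in> \<beta>"
    by (rule transD)
  with zx(1) have "(z, x) \<in> \<alpha> \<inter> \<beta>"
    by (rule IntI)
  with zx(2) show False
    unfolding meet by blast
qed

lemma half_space_incomparable_succ:
  assumes "half_space A \<alpha>" and "(x, y) \<in> incomparable A \<alpha>" and "(x, z) \<in> \<alpha>" "z \<noteq> x"
  shows "(y, z) \<in> \<alpha>"
  using half_space_incomparable_pred[OF half_space_converse[OF assms(1)], of x y z] assms(2-)
  by simp

lemma half_space_incomparable_trans: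
  assumes hs: "half_space A \<alpha>"
    and xy: "(x, y) \<in> incomparable A \<alpha>" and yz: "(y, z) \<in> incomparable A \<alpha>" and "x \<noteq> z"
  shows "(x, z) \<in> incomparable A \<alpha>"
proof -
  have "(x, z) \<notin> \<alpha>"
    using half_space_incomparable_pred[OF hs incomparable_sym[OF yz]] xy \<open>x \<noteq> z\<close>
    unfolding incomparable_def by blast
  moreover have "(z, x) \<notin> \<alpha>"
    using half_space_incomparable_succ[OF hs incomparable_sym[OF yz]] xy \<open>x \<noteq> z\<close>
    unfolding incomparable_def by blast
  ultimately show ?thesis
    using xy yz unfolding incomparable_def by blast
qed

definition total_extension :: "'a set \<Rightarrow> 'a rel \<Rightarrow> 'a rel \<Rightarrow> 'a rel" where
  "total_extension A \<alpha> V = \<alpha> \<union> (incomparable A \<alpha> \<inter> V)"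

lemma trans_total_extension:
  assumes hs: "half_space A \<alpha>" and "trans V"
  shows "trans (total_extension A \<alpha> V)"
proof (rule transI)
  fix x y z
  let ?R = "incomparable A \<alpha> \<inter> V"
  assume xy: "(x, y) \<in> total_extension A \<alpha> V" and yz: "(y, z) \<in> total_extension A \<alpha> V"
  have pre: "preorder_on A \<alpha>"
    using hs by (rule half_space_preorder_on)
  consider "(x, y) \<in> \<alpha>" "(y, z) \<in> \<alpha>" | "(x, y) \<in> \<alpha>" "(y, z) \<in> ?R"
    | "(x, y) \<in> ?R" "(y, z) \<in> \<alpha>" | "(x, y) \<in> ?R" "(y, z) \<in> ?R"
    using xy yz unfolding total_extension_def by blast
  then have "(x, z) \<in> \<alpha> \<or> (x, z) \<in> ?R"
  proof cases
    case 1
    then show ?thesis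
      using pre unfolding preorder_on_def trans_def by blast
  next
    case 2
    then show ?thesis
      using half_space_incomparable_pred[OF hs] by (cases "x = y") auto
  next
    case 3
    then show ?thesis
      using half_space_incomparable_succ[OF hs incomparable_sym] by (cases "y = z") auto
  next
    case 4
    then show ?thesis
      using half_space_incomparable_trans[OF hs] pre \<open>trans V\<close>
      unfolding incomparable_def preorder_on_def refl_on_def trans_def
      by (cases "x = z") blast+
  qed
  then show "(x, z) \<in> total_extension A \<alpha> V"
    unfolding total_extension_def by blast
qed

lemma preorder_on_total_extension:
  assumes "half_space A \<alpha>" and "trans V"
  shows "preorder_on A (total_extension A \<alpha> V)"
  using half_space_preorder_on[OF assms(1)] trans_total_extension[OF assms]
  unfolding preorder_on_def total_extension_def incomparable_def refl_on_def by blast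

lemma total_on_total_extension: "total_on A V \<Longrightarrow> total_on A (total_extension A \<alpha> V)"
  unfolding total_on_def total_extension_def incomparable_def by blast

lemma qkernel_total_extension:
  assumes "refl_on A \<alpha>" and "antisym V"
  shows "qkernel (total_extension A \<alpha> V) = qkernel \<alpha>"
  using assms unfolding qkernel_def total_extension_def incomparable_def refl_on_def antisym_def
  by blast

lemma total_extension_Int_converse:
  assumes "refl_on A \<alpha>" and "antisym V"
  shows "total_extension A \<alpha> V \<inter> total_extension A \<alpha> (V\<inverse>) = \<alpha>"
  using assms unfolding total_extension_def incomparable_def refl_on_def antisym_def by blast

lemma half_space_total_extension:
  assumes hs: "half_space A \<alpha>" and V: "linear_order_on A V"
  shows "preorder_on A (total_extension A \<alpha> V)" "total_on A (total_extension A \<alpha> V)"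
    and "qkernel (total_extension A \<alpha> V) = qkernel \<alpha>"
proof -
  from V have "trans V" "total_on A V" "antisym V"
    unfolding order_on_defs by blast+
  then show "preorder_on A (total_extension A \<alpha> V)" "total_on A (total_extension A \<alpha> V)"
    "qkernel (total_extension A \<alpha> V) = qkernel \<alpha>"
    using preorder_on_total_extension[OF hs] total_on_total_extension
      qkernel_total_extension half_space_preorder_on[OF hs]
    unfolding preorder_on_def by blast+
qed

theorem corollary2p6:
  fixes A :: "'a set" and \<alpha> :: "'a rel"
  assumes "half_space A \<alpha>"
  shows "(\<exists>R1 R2. linear_order_on (A // qkernel \<alpha>) R1 \<and> linear_order_on (A // qkernel \<alpha>) R2
            \<and> induced_order \<alpha> = R1 \<inter> R2)
         \<and> order_dim_le (A // qkernel \<alpha>) (induced_order \<alpha>) 2"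
proof -
  obtain W where W: "linear_order_on A W"
    using well_order_on unfolding well_order_on_def by blast
  then have W': "linear_order_on A (W\<inverse>)"
    by simp
  define L\<^sub>1 where "L\<^sub>1 = total_extension A \<alpha> W"
  define L\<^sub>2 where "L\<^sub>2 = total_extension A \<alpha> (W\<inverse>)"
  note ext\<^sub>1 = half_space_total_extension[OF assms W, folded L\<^sub>1_def]
  note ext\<^sub>2 = half_space_total_extension[OF assms W', folded L\<^sub>2_def]
  have lin: "linear_order_on (A // qkernel \<alpha>) (induced_order L\<^sub>1)"
    "linear_order_on (A // qkernel \<alpha>) (induced_order L\<^sub>2)"
    using linear_order_on_induced_order[OF ext\<^sub>1(1,2)] linear_order_on_induced_order[OF ext\<^sub>2(1,2)]
    unfolding ext\<^sub>1(3) ext\<^sub>2(3) .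
  have "L\<^sub>1 \<inter> L\<^sub>2 = \<alpha>"
    unfolding L\<^sub>1_def L\<^sub>2_def using half_space_preorder_on[OF assms] W
    by (intro total_extension_Int_converse) (simp_all add: order_on_defs)
  then have inter: "induced_order \<alpha> = induced_order L\<^sub>1 \<inter> induced_order L\<^sub>2"
    using induced_order_Int[OF ext\<^sub>1(1) ext\<^sub>2(1)] ext\<^sub>1(3) ext\<^sub>2(3) by simp
  show ?thesis
    unfolding inter using lin order_dim_le_2I[OF lin] by blast
qed

end
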